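(* Let $\mathrm{GNN}$ be a node-most-expressive GNN and $\mathrm{AGG}$ an injective function on finite multisets of node representations, and fix a labeling trick. For any node sets $S,S'$ of graphs ${\mathcal A},{\mathcal A}'$ and any integer $h\ge 0$, let ${\mathcal A}^{(S)}_{(S,h)}$ denote the labeled graph obtained by applying the labeling trick to $(S,{\mathcal A}_{(S,h)})$, and set $\mathrm{GNN}(S,{\mathcal A}^{(S)}_{(S,h)}):=\mathrm{AGG}(\{\mathrm{GNN}(i,{\mathcal A}^{(S)}_{(S,h)})\mid i\in S\})$. Then $$\mathrm{GNN}(S,{\mathcal A}^{(S)}_{(S,h)})=\mathrm{GNN}(S',{\mathcal A}'^{(S')}_{(S',h)})\iff (S,{\mathcal A}_{(S,h)})\simeq(S',{\mathcal A}'_{(S',h)}).$$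
   Context: Graphs are encoded by tensors ${\mathcal A}\in\mathbb R^{m\times m\times k}$ (diagonal: node features; off-diagonal: edge features; first slice: adjacency matrix). The $h$-hop enclosing subgraph ${\mathcal A}_{(S,h)}$ is the subgraph (with features) induced by the nodes $\bigcup_{j\in S}\{i: d(i,j)\le h\}$, $d$ the shortest-path distance, with nodes reindexed $1,\dots,m$. A permutation $\pi$ acts by $\pi(S)=\{\pi(i):i\in S\}$ and $\pi({\mathcal A})_{\pi(i),\pi(j),:}={\mathcal A}_{i,j,:}$; $(S,{\mathcal A})\simeq(S',{\mathcal A}')$ iff the two graphs have the same number of nodes and some $\pi$ has $S=\pi(S')$, ${\mathcal A}=\pi({\mathcal A}')$. A GNN is node-most-expressive if $\mathrm{GNN}(i,{\mathcal A})=\mathrm{GNN}(j,{\mathcal A}')\iff(\{i\},{\mathcal A})\simeq(\{j\},{\mathcal A}')$ for all graphs (of any size and feature dimension). A labeling trick assigns to each $(S,{\mathcal A})$ (graph with $m$ nodes) a labeling tensor ${\mathcal L}^{(S)}\in\mathbb R^{m\times m\times d}$ that is stacked onto ${\mathcal A}$ in the third dimension to form ${\mathcal A}^{(S)}$, satisfying for all $S,{\mathcal A},S',{\mathcal A}',\pi$: (1) ${\mathcal L}^{(S)}=\pi({\mathcal L}^{(S')})\Rightarrow S=\pi(S')$; (2) $S=\pi(S')$ and ${\mathcal A}=\pi({\mathcal A}')\Rightarrow{\mathcal L}^{(S)}=\pi({\mathcal L}^{(S')})$. *)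

theory Defs
  imports "HOL-Library.Multiset" "HOL-Library.Extended_Nat" "HOL-Combinatorics.Permutations"
begin

text \<open>A tensor in R^(m x m x k) is encoded as (m, k, f), where f i j c is the
entry at (i,j,c) (indices 0-based); it is required to vanish outside the index range.\<close>

type_synonym tensor = "nat \<times> nat \<times> (nat \<Rightarrow> nat \<Rightarrow> nat \<Rightarrow> real)"

definition nodes :: "tensor \<Rightarrow> nat" where "nodes A = fst A"
definition fdim :: "tensor \<Rightarrow> nat" where "fdim A = fst (snd A)"
definition ent :: "tensor \<Rightarrow> nat \<Rightarrow> nat \<Rightarrow> nat \<Rightarrow> real" where "ent A = snd (snd A)"

definition wf_tensor :: "tensor \<Rightarrow> bool" where
  "wf_tensor A \<longleftrightarrow> (\<forall>i j c. (nodes A \<le> i \<or> nodes A \<le> j \<or> fdim A \<le> c) \<longrightarrow> ent A i j c = 0)"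

text \<open>A graph: a well-formed tensor with at least one feature slice (the first slice is
the adjacency matrix).\<close>
definition graph :: "tensor \<Rightarrow> bool" where
  "graph A \<longleftrightarrow> wf_tensor A \<and> 1 \<le> fdim A"

fun walk :: "tensor \<Rightarrow> nat \<Rightarrow> nat \<Rightarrow> nat \<Rightarrow> bool" where
  "walk A 0 i j = (i = j)"
| "walk A (Suc n) i j = (\<exists>v. ent A i v 0 \<noteq> 0 \<and> walk A n v j)"

definition dist :: "tensor \<Rightarrow> nat \<Rightarrow> nat \<Rightarrow> enat" where
  "dist A i j = (if \<exists>n. walk A n i j then enat (LEAST n. walk A n i j) else \<infinity>)"

text \<open>Action of a permutation pi of the nodes: pi(A)_{pi i, pi j, :} = A_{i,j,:}.\<close>
definition perm_act :: "(nat \<Rightarrow> nat) \<Rightarrow> tensor \<Rightarrow> tensor" where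
  "perm_act \<pi> A = (nodes A, fdim A, \<lambda>a b c. ent A (inv \<pi> a) (inv \<pi> b) c)"

definition iso :: "nat set \<times> tensor \<Rightarrow> nat set \<times> tensor \<Rightarrow> bool" where
  "iso P P' \<longleftrightarrow> (case P of (S, A) \<Rightarrow> case P' of (S', A') \<Rightarrow>
     nodes A = nodes A' \<and>
     (\<exists>\<pi>. \<pi> permutes {..<nodes A'} \<and> S = \<pi> ` S' \<and> A = perm_act \<pi> A'))"

definition stack :: "tensor \<Rightarrow> tensor \<Rightarrow> tensor" where
  "stack A L = (nodes A, fdim A + fdim L,
     \<lambda>i j c. if c < fdim A then ent A i j c else ent L i j (c - fdim A))"

text \<open>h-hop enclosing subgraph of S in A, nodes reindexed 0..m'-1 in increasing order;
returns the reindexed node set S together with the induced subgraph (with features).\<close>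
definition enclosing_subgraph :: "nat \<Rightarrow> nat set \<Rightarrow> tensor \<Rightarrow> nat set \<times> tensor" where
  "enclosing_subgraph h S A =
     (let ns = sorted_list_of_set {i. i < nodes A \<and> (\<exists>j\<in>S. dist A i j \<le> enat h)} in
      ({a. a < length ns \<and> ns ! a \<in> S},
       (length ns, fdim A,
        \<lambda>a b c. if a < length ns \<and> b < length ns then ent A (ns ! a) (ns ! b) c else 0)))"

definition node_most_expressive :: "(nat \<Rightarrow> tensor \<Rightarrow> 'r) \<Rightarrow> bool" where
  "node_most_expressive gnn \<longleftrightarrow>
     (\<forall>A A' i j. graph A \<and> graph A' \<and> i < nodes A \<and> j < nodes A' \<longrightarrow>
        (gnn i A = gnn j A' \<longleftrightarrow> iso ({i}, A) ({j}, A')))"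

text \<open>A labeling trick: assigns to each (S, A) (S a node set of the graph A with m nodes)
a labeling tensor in R^(m x m x d) (d fixed by the labeling trick) satisfying
properties (1) and (2).\<close>
definition labeling_trick :: "(nat set \<Rightarrow> tensor \<Rightarrow> tensor) \<Rightarrow> bool" where
  "labeling_trick lab \<longleftrightarrow>
     (\<forall>S A. graph A \<and> S \<subseteq> {..<nodes A} \<longrightarrow>
        wf_tensor (lab S A) \<and> nodes (lab S A) = nodes A) \<and>
     (\<exists>d. \<forall>S A. graph A \<and> S \<subseteq> {..<nodes A} \<longrightarrow> fdim (lab S A) = d) \<and>
     (\<forall>S A S' A' \<pi>. graph A \<and> graph A' \<and> S \<subseteq> {..<nodes A} \<and> S' \<subseteq> {..<nodes A'} \<and>
        \<pi> permutes {..<nodes A'} \<longrightarrow>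
        (lab S A = perm_act \<pi> (lab S' A') \<longrightarrow> S = \<pi> ` S') \<and>
        (S = \<pi> ` S' \<and> A = perm_act \<pi> A' \<longrightarrow> lab S A = perm_act \<pi> (lab S' A')))"

definition gnn_set ::
  "(nat \<Rightarrow> tensor \<Rightarrow> 'r) \<Rightarrow> ('r multiset \<Rightarrow> 'o) \<Rightarrow> (nat set \<Rightarrow> tensor \<Rightarrow> tensor) \<Rightarrow>
   nat \<Rightarrow> nat set \<Rightarrow> tensor \<Rightarrow> 'o" where
  "gnn_set gnn agg lab h S A =
     (case enclosing_subgraph h S A of (T, B) \<Rightarrow>
        agg (image_mset (\<lambda>i. gnn i (stack B (lab T B))) (mset_set T)))"

end

theory Submission
  imports Defs
begin

text \<open>If AGG is injective, equal set representations give equal multisets of node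
representations; one shared value GNN(i, A^(S)) = GNN(j, A'^(S')) already forces, by
node-most-expressiveness, a permutation carrying the whole labeled graph A'^(S') onto A^(S).
Splitting the stacked tensor, the permutation carries the subgraph onto the subgraph and
the labeling onto the labeling, and property (1) of the labeling trick makes it carry
S' onto S. Conversely, an isomorphism of the enclosing subgraphs is, by property (2),
an isomorphism of the labeled graphs, under which node representations are invariant.\<close>

definition labeled :: "(nat set \<Rightarrow> tensor \<Rightarrow> tensor) \<Rightarrow> nat set \<Rightarrow> tensor \<Rightarrow> tensor" where
  "labeled lab S A = stack A (lab S A)"

lemma tensor_eq_iff: "X = Y \<longleftrightarrow> nodes X = nodes Y \<and> fdim X = fdim Y \<and> ent X = ent Y"
  by (cases X, cases Y) (auto simp: nodes_def fdim_def ent_def)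

lemma perm_act_simps [simp]:
  "nodes (perm_act \<pi> A) = nodes A"
  "fdim (perm_act \<pi> A) = fdim A"
  "ent (perm_act \<pi> A) a b c = ent A (inv \<pi> a) (inv \<pi> b) c"
  by (simp_all add: perm_act_def nodes_def fdim_def ent_def)

lemma stack_simps [simp]:
  "nodes (stack B L) = nodes B"
  "fdim (stack B L) = fdim B + fdim L"
  "ent (stack B L) i j c = (if c < fdim B then ent B i j c else ent L i j (c - fdim B))"
  by (simp_all add: stack_def nodes_def fdim_def ent_def)

lemma wf_tensor_perm_act:
  assumes "wf_tensor A" "\<pi> permutes {..<nodes A}"
  shows "wf_tensor (perm_act \<pi> A)"
proof -
  have "nodes A \<le> inv \<pi> a" if "nodes A \<le> a" for a
    using that permutes_inv[OF assms(2)] by (simp add: permutes_not_in)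
  then show ?thesis
    using assms(1) unfolding wf_tensor_def by auto
qed

lemma graph_perm_act: "graph A \<Longrightarrow> \<pi> permutes {..<nodes A} \<Longrightarrow> graph (perm_act \<pi> A)"
  unfolding graph_def using wf_tensor_perm_act by simp

lemma graph_stack: "graph B \<Longrightarrow> wf_tensor L \<Longrightarrow> nodes L = nodes B \<Longrightarrow> graph (stack B L)"
  unfolding graph_def wf_tensor_def by auto

lemma perm_act_stack: "perm_act \<pi> (stack B L) = stack (perm_act \<pi> B) (perm_act \<pi> L)"
  by (simp add: tensor_eq_iff fun_eq_iff)

lemma stack_eq_stack_iff:
  assumes "wf_tensor B" "wf_tensor C" "nodes L = nodes B" "nodes M = nodes C" "fdim L = fdim M"
  shows "stack B L = stack C M \<longleftrightarrow> B = C \<and> L = M"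
proof
  assume eq: "stack B L = stack C M"
  then have nodes_eq: "nodes B = nodes C" and fdim_eq: "fdim B = fdim C"
    using assms(5) by (metis stack_simps(1), metis stack_simps(2) add_right_cancel)
  have ent_eq: "ent (stack B L) i j c = ent (stack C M) i j c" for i j c
    using eq by simp
  have "ent B i j c = ent C i j c" for i j c
    using ent_eq[of i j c] assms(1,2) fdim_eq unfolding wf_tensor_def
    by (cases "c < fdim B") auto
  moreover have "ent L i j c = ent M i j c" for i j c
    using ent_eq[of i j "c + fdim B"] fdim_eq by simp
  ultimately show "B = C \<and> L = M"
    using nodes_eq fdim_eq assms(3-5) by (simp add: tensor_eq_iff fun_eq_iff)
qed simp

lemma dist_self: "dist A i i = 0"
proof -
  have "walk A 0 i i"
    by simp
  then have "\<exists>n. walk A n i i" and "(LEAST n. walk A n i i) = 0"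
    by (blast, rule Least_eq_0)
  then show ?thesis
    unfolding dist_def zero_enat_def by simp
qed

lemma enclosing_subgraph_graph:
  "graph A \<Longrightarrow> enclosing_subgraph h S A = (T, B) \<Longrightarrow> graph B"
  unfolding enclosing_subgraph_def graph_def wf_tensor_def Let_def
  by (auto simp: nodes_def fdim_def ent_def)

lemma enclosing_subgraph_subset:
  "enclosing_subgraph h S A = (T, B) \<Longrightarrow> T \<subseteq> {..<nodes B}"
  unfolding enclosing_subgraph_def Let_def by (auto simp: nodes_def)

lemma enclosing_subgraph_nonempty:
  assumes "S \<subseteq> {..<nodes A}" "S \<noteq> {}" "enclosing_subgraph h S A = (T, B)"
  shows "T \<noteq> {}"
proof -
  define ns where "ns = sorted_list_of_set {i. i < nodes A \<and> (\<exists>j\<in>S. dist A i j \<le> enat h)}"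
  have T: "T = {a. a < length ns \<and> ns ! a \<in> S}"
    using assms(3) unfolding enclosing_subgraph_def ns_def Let_def by auto
  obtain j where "j \<in> S"
    using assms(2) by auto
  then have "j \<in> set ns"
    using assms(1) dist_self[of A j] unfolding ns_def by (auto intro: bexI[where x = j])
  then obtain a where "a < length ns" "ns ! a = j"
    by (auto simp: in_set_conv_nth)
  with \<open>j \<in> S\<close> show ?thesis
    unfolding T by auto
qed

lemma
  assumes "labeling_trick lab" "graph A" "S \<subseteq> {..<nodes A}"
  shows labeling_trick_wf_tensor: "wf_tensor (lab S A)"
    and labeling_trick_nodes: "nodes (lab S A) = nodes A"
  using assms(1)[unfolded labeling_trick_def, THEN conjunct1, rule_format, OF conjI[OF assms(2,3)]]
  by simp_all

lemma labeling_trick_fdim_eq: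
  assumes "labeling_trick lab" "graph A" "graph A'" "S \<subseteq> {..<nodes A}" "S' \<subseteq> {..<nodes A'}"
  shows "fdim (lab S A) = fdim (lab S' A')"
proof -
  obtain d where "\<forall>S A. graph A \<and> S \<subseteq> {..<nodes A} \<longrightarrow> fdim (lab S A) = d"
    using assms(1)[unfolded labeling_trick_def, THEN conjunct2, THEN conjunct1] by (elim exE)
  from this[rule_format, OF conjI[OF assms(2,4)]] this[rule_format, OF conjI[OF assms(3,5)]]
  show ?thesis
    by simp
qed

lemma labeling_trick_perm_act_iff:
  assumes "labeling_trick lab" "graph A'" "S \<subseteq> {..<nodes A}" "S' \<subseteq> {..<nodes A'}"
    "\<pi> permutes {..<nodes A'}" "A = perm_act \<pi> A'"
  shows "lab S A = perm_act \<pi> (lab S' A') \<longleftrightarrow> S = \<pi> ` S'"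
proof -
  have "graph A \<and> graph A' \<and> S \<subseteq> {..<nodes A} \<and> S' \<subseteq> {..<nodes A'} \<and> \<pi> permutes {..<nodes A'}"
    using assms(2-6) graph_perm_act by blast
  from assms(1)[unfolded labeling_trick_def, THEN conjunct2, THEN conjunct2, rule_format, OF this]
  show ?thesis
    using assms(6) by blast
qed

lemma graph_labeled:
  "labeling_trick lab \<Longrightarrow> graph A \<Longrightarrow> S \<subseteq> {..<nodes A} \<Longrightarrow> graph (labeled lab S A)"
  unfolding labeled_def
  by (simp add: graph_stack labeling_trick_wf_tensor labeling_trick_nodes)

lemma nodes_labeled [simp]: "nodes (labeled lab S A) = nodes A"
  by (simp add: labeled_def)

lemma labeled_eq_perm_act_iff:
  assumes "labeling_trick lab" "graph A" "graph A'" "S \<subseteq> {..<nodes A}" "S' \<subseteq> {..<nodes A'}"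
    "\<pi> permutes {..<nodes A'}"
  shows "labeled lab S A = perm_act \<pi> (labeled lab S' A') \<longleftrightarrow> S = \<pi> ` S' \<and> A = perm_act \<pi> A'"
proof -
  have "wf_tensor A" "wf_tensor (perm_act \<pi> A')"
    using assms(2,3,6) wf_tensor_perm_act unfolding graph_def by blast+
  moreover have "nodes (lab S A) = nodes A" "nodes (perm_act \<pi> (lab S' A')) = nodes (perm_act \<pi> A')"
    using assms(1-5) labeling_trick_nodes by simp_all
  moreover have "fdim (lab S A) = fdim (perm_act \<pi> (lab S' A'))"
    using labeling_trick_fdim_eq[OF assms(1-5)] by simp
  ultimately have "labeled lab S A = perm_act \<pi> (labeled lab S' A')
      \<longleftrightarrow> A = perm_act \<pi> A' \<and> lab S A = perm_act \<pi> (lab S' A')"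
    unfolding labeled_def perm_act_stack by (rule stack_eq_stack_iff)
  also have "\<dots> \<longleftrightarrow> S = \<pi> ` S' \<and> A = perm_act \<pi> A'"
    using labeling_trick_perm_act_iff[OF assms(1,3-6)] by blast
  finally show ?thesis .
qed

lemma node_most_expressive_eq_iff:
  assumes "node_most_expressive gnn" "graph X" "graph X'" "i < nodes X" "j < nodes X'"
  shows "gnn i X = gnn j X' \<longleftrightarrow> (\<exists>\<pi>. \<pi> permutes {..<nodes X'} \<and> i = \<pi> j \<and> X = perm_act \<pi> X')"
proof -
  have "gnn i X = gnn j X' \<longleftrightarrow> iso ({i}, X) ({j}, X')"
    using assms(1)[unfolded node_most_expressive_def, rule_format, of X X' i j] assms(2-5) by blast
  also have "\<dots> \<longleftrightarrow> (\<exists>\<pi>. \<pi> permutes {..<nodes X'} \<and> i = \<pi> j \<and> X = perm_act \<pi> X')"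
    unfolding iso_def by fastforce
  finally show ?thesis .
qed

lemma node_most_expressive_perm_act:
  assumes "node_most_expressive gnn" "graph X" "\<pi> permutes {..<nodes X}" "j < nodes X"
  shows "gnn (\<pi> j) (perm_act \<pi> X) = gnn j X"
proof -
  have "\<pi> j < nodes (perm_act \<pi> X)"
    using assms(3,4) permutes_in_image by fastforce
  from node_most_expressive_eq_iff[OF assms(1) graph_perm_act[OF assms(2,3)] assms(2) this assms(4)]
  show ?thesis
    using assms(3) by blast
qed

lemma image_mset_node_most_expressive_perm_act:
  assumes "node_most_expressive gnn" "graph X" "\<pi> permutes {..<nodes X}" "T \<subseteq> {..<nodes X}"
  shows "image_mset (\<lambda>i. gnn i (perm_act \<pi> X)) (mset_set (\<pi> ` T))
    = image_mset (\<lambda>i. gnn i X) (mset_set T)"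
proof -
  have "mset_set (\<pi> ` T) = image_mset \<pi> (mset_set T)"
    using permutes_inj[OF assms(3)] by (simp add: image_mset_mset_set inj_on_subset)
  then have "image_mset (\<lambda>i. gnn i (perm_act \<pi> X)) (mset_set (\<pi> ` T))
      = image_mset (\<lambda>i. gnn (\<pi> i) (perm_act \<pi> X)) (mset_set T)"
    by (simp add: image_mset.compositionality comp_def)
  also have "\<dots> = image_mset (\<lambda>i. gnn i X) (mset_set T)"
  proof (rule image_mset_cong)
    fix i
    assume "i \<in># mset_set T"
    then have "i < nodes X"
      using assms(4) elem_mset_set finite_subset by fastforce
    then show "gnn (\<pi> i) (perm_act \<pi> X) = gnn i X"
      by (rule node_most_expressive_perm_act[OF assms(1-3)])
  qed
  finally show ?thesis .
qed

lemma image_mset_gnn_labeled_eq_iff: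
  assumes "node_most_expressive gnn" "labeling_trick lab" "graph B" "graph B'"
    "T \<subseteq> {..<nodes B}" "T' \<subseteq> {..<nodes B'}" "T \<noteq> {}"
  shows "image_mset (\<lambda>i. gnn i (labeled lab T B)) (mset_set T)
      = image_mset (\<lambda>i. gnn i (labeled lab T' B')) (mset_set T')
    \<longleftrightarrow> iso (T, B) (T', B')"
proof
  assume eq: "image_mset (\<lambda>i. gnn i (labeled lab T B)) (mset_set T)
    = image_mset (\<lambda>i. gnn i (labeled lab T' B')) (mset_set T')"
  have "finite T" "finite T'"
    using assms(5,6) finite_subset by blast+
  obtain i where "i \<in> T"
    using assms(7) by auto
  then have "gnn i (labeled lab T B) \<in># image_mset (\<lambda>i. gnn i (labeled lab T' B')) (mset_set T')"
    unfolding eq[symmetric] using \<open>finite T\<close> by simp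
  then obtain j where "j \<in> T'" "gnn i (labeled lab T B) = gnn j (labeled lab T' B')"
    using \<open>finite T'\<close> by auto
  moreover have "i < nodes B" "j < nodes B'"
    using \<open>i \<in> T\<close> \<open>j \<in> T'\<close> assms(5,6) by auto
  ultimately obtain \<pi> where "\<pi> permutes {..<nodes B'}"
      "labeled lab T B = perm_act \<pi> (labeled lab T' B')"
    using node_most_expressive_eq_iff[OF assms(1) graph_labeled[OF assms(2,3,5)]
        graph_labeled[OF assms(2,4,6)]]
    by auto
  then show "iso (T, B) (T', B')"
    unfolding iso_def using labeled_eq_perm_act_iff[OF assms(2-6)] by auto
next
  assume "iso (T, B) (T', B')"
  then obtain \<pi> where \<pi>: "\<pi> permutes {..<nodes B'}" and "T = \<pi> ` T'" "B = perm_act \<pi> B'"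
    unfolding iso_def by auto
  then have "labeled lab T B = perm_act \<pi> (labeled lab T' B')"
    using labeled_eq_perm_act_iff[OF assms(2-6) \<pi>] by simp
  then show "image_mset (\<lambda>i. gnn i (labeled lab T B)) (mset_set T)
    = image_mset (\<lambda>i. gnn i (labeled lab T' B')) (mset_set T')"
    using \<open>T = \<pi> ` T'\<close> image_mset_node_most_expressive_perm_act[OF assms(1)
        graph_labeled[OF assms(2,4,6)]] \<pi> assms(6)
    by simp
qed

theorem corollary1:
  fixes gnn :: "nat \<Rightarrow> tensor \<Rightarrow> 'r"
    and agg :: "'r multiset \<Rightarrow> 'o"
    and lab :: "nat set \<Rightarrow> tensor \<Rightarrow> tensor"
    and h :: nat
    and S S' :: "nat set" and A A' :: tensor
  assumes "node_most_expressive gnn"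
    and "inj agg"
    and "labeling_trick lab"
    and "graph A" and "graph A'"
    and "S \<subseteq> {..<nodes A}" and "S' \<subseteq> {..<nodes A'}"
    and "S \<noteq> {}" and "S' \<noteq> {}"
  shows "gnn_set gnn agg lab h S A = gnn_set gnn agg lab h S' A'
     \<longleftrightarrow> iso (enclosing_subgraph h S A) (enclosing_subgraph h S' A')"
proof -
  obtain T B where E: "enclosing_subgraph h S A = (T, B)"
    by (metis prod.exhaust)
  obtain T' B' where E': "enclosing_subgraph h S' A' = (T', B')"
    by (metis prod.exhaust)
  have "gnn_set gnn agg lab h S A = gnn_set gnn agg lab h S' A'
    \<longleftrightarrow> image_mset (\<lambda>i. gnn i (labeled lab T B)) (mset_set T)
      = image_mset (\<lambda>i. gnn i (labeled lab T' B')) (mset_set T')"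
    unfolding gnn_set_def E E' labeled_def using \<open>inj agg\<close> by (simp add: inj_eq)
  also have "\<dots> \<longleftrightarrow> iso (T, B) (T', B')"
    \<comment> \<open>only \<open>S \<noteq> {}\<close> is needed: equal multisets then make \<open>T'\<close> nonempty as well\<close>
    using assms(1,3) enclosing_subgraph_graph[OF assms(4) E] enclosing_subgraph_graph[OF assms(5) E']
      enclosing_subgraph_subset[OF E] enclosing_subgraph_subset[OF E']
      enclosing_subgraph_nonempty[OF assms(6,8) E]
    by (rule image_mset_gnn_labeled_eq_iff)
  finally show ?thesis
    unfolding E E' .
qed

end
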